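(* Let $\gamma>0$ and let $p,q\in L^1(\mathbb{R}_+)$ with supports in $[0,\gamma]$. Consider $(x,k)\in\mathbb{R}_+\times S(r)$, with $X,\Gamma,\Omega$ as defined in the context. Then the entries of $\Omega(x,k)$ satisfy $$ \partial_x\Omega_{j\ell}(x,k)=4k^3\,\Gamma_{j4}(x,k)\,f_\ell(x,k),\qquad j,\ell\in\{1,2,3,4\}, $$ where $(f_1,f_2,f_3,f_4)=(\varphi_2,\varphi_4,\psi_1,\psi_2)$.
   Context: Quasi-derivatives: $y^{[0]}=y$, $y^{[1]}=y'$, $y^{[2]}=y''$, $y^{[3]}=y'''+2py'$. For $k\in\mathbb{C}$ let $\varphi_j(x,k)$, $j=1,\dots,4$, be the solutions on $\mathbb{R}_+$ of $y''''+2(py')'+qy=k^4y$ with $y^{[m]}$ locally absolutely continuous and $\varphi_j^{[\ell-1]}(0,k)=\delta_{j\ell}$. Let $S=\{\arg k\in(0,\pi/4)\}$ and $S(r)=\{k\in S:|k|>r\}$. For $k\in S$ let $\psi_1,\psi_2$ be the Jost solutions of the same equation with $\psi_1(x,k)=e^{-kx}$ and $\psi_2(x,k)=e^{ikx}$ for $x>\gamma$. Here $r>0$ is large enough that $\psi_1,\psi_2$ are analytic on $S(r)$ and the matrix $X$ below is invertible there. Define the $4\times4$ matrix $X(x,k)$ whose columns are $(f^{[0]},f^{[1]},f^{[2]},f^{[3]})^\top$ for $f=\varphi_2,\varphi_4,\psi_1,\psi_2$, in this order. Define $\Gamma=(\Gamma_{j\ell})=X^{-1}$ and $\Omega=(\Omega_{j\ell})=X^{-1}\dot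 X$, where the dot denotes $\partial/\partial k$. *)

theory Defs
  imports "HOL-Analysis.Analysis"
begin

text \<open>Right-hand side of the first-order system for the quasi-derivative vector
  Y = (y, y', y'', y''' + 2 p y') of  y'''' + 2 (p y')' + q y = k^4 y :
  Y1' = Y2, Y2' = Y3, Y3' = Y4 - 2 p Y2, Y4' = (k^4 - q) Y1.\<close>
definition qrhs :: "(real \<Rightarrow> real) \<Rightarrow> (real \<Rightarrow> real) \<Rightarrow> complex \<Rightarrow> real
    \<Rightarrow> complex^4 \<Rightarrow> complex^4" where
  "qrhs p q k t Y = (\<chi> i. if i = 1 then Y$2
                      else if i = 2 then Y$3
                      else if i = 3 then Y$4 - 2 * complex_of_real (p t) * Y$2
                      else (k^4 - complex_of_real (q t)) * Y$1)"

text \<open>Y is the vector of quasi-derivatives (y^[0],...,y^[3]) of a solution on R_+,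
  all quasi-derivatives locally absolutely continuous (integral form).\<close>
definition qsol :: "(real \<Rightarrow> real) \<Rightarrow> (real \<Rightarrow> real) \<Rightarrow> complex \<Rightarrow> (real \<Rightarrow> complex^4) \<Rightarrow> bool" where
  "qsol p q k Y \<longleftrightarrow> (\<forall>x\<ge>0. (\<lambda>t. qrhs p q k t (Y t)) absolutely_integrable_on {0..x}
      \<and> Y x = Y 0 + integral {0..x} (\<lambda>t. qrhs p q k t (Y t)))"

definition sectorS :: "complex set" where
  "sectorS = {k. k \<noteq> 0 \<and> 0 < Arg k \<and> Arg k < pi/4}"

definition sectorSr :: "real \<Rightarrow> complex set" where
  "sectorSr r = {k \<in> sectorS. r < norm k}"

definition Xmat :: "(4 \<Rightarrow> real \<Rightarrow> complex \<Rightarrow> complex^4) \<Rightarrow> real \<Rightarrow> complex \<Rightarrow> complex^4^4" where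
  "Xmat F x k = (\<chi> m c. F c x k $ m)"

definition Xdot :: "(4 \<Rightarrow> real \<Rightarrow> complex \<Rightarrow> complex^4) \<Rightarrow> real \<Rightarrow> complex \<Rightarrow> complex^4^4" where
  "Xdot F x k = (\<chi> m c. deriv (\<lambda>\<kappa>. F c x \<kappa> $ m) k)"

definition Gmat :: "(4 \<Rightarrow> real \<Rightarrow> complex \<Rightarrow> complex^4) \<Rightarrow> real \<Rightarrow> complex \<Rightarrow> complex^4^4" where
  "Gmat F x k = matrix_inv (Xmat F x k)"

definition Omat :: "(4 \<Rightarrow> real \<Rightarrow> complex \<Rightarrow> complex^4) \<Rightarrow> real \<Rightarrow> complex \<Rightarrow> complex^4^4" where
  "Omat F x k = matrix_inv (Xmat F x k) ** Xdot F x k"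

definition cols :: "'a \<Rightarrow> 'a \<Rightarrow> 'a \<Rightarrow> 'a \<Rightarrow> 4 \<Rightarrow> 'a" where
  "cols a b c d i = (if i = 1 then a else if i = 2 then b else if i = 3 then c else d)"

end

theory Submission
  imports Defs
begin

text \<open>
  Fix  k  and write  [Y, Z] = Y1 Z4 - Y2 Z3 + Y3 Z2 - Y4 Z1  for quasi-derivative vectors.  For a
  solution  Y  with parameter  k  and a solution  Z  with parameter  \<kappa>,  Lagrange's identity gives
  [Y, Z](x) = [Y, Z](0) + (\<kappa>^4 - k^4) int_0^x Y1 Z1.  Applied to the columns  f_a  of  X  this makes
  B = X^T J X  constant, hence  \<Gamma> = B^-1 X^T J,  and it represents every solution with parameter  \<kappa>
  as  Z(x) = X(x) B^-1 (X(0)^T J Z(0) + (\<kappa>^4 - k^4) int_0^x (f_a1 Z1)_a).  Since the factor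
  \<kappa>^4 - k^4  is small near  k,  this Volterra-type identity yields continuity of  Z(x, \<kappa>)  in  \<kappa>
  uniformly on compact  x-intervals, and then the  \<kappa>-derivative
  dZ/d\<kappa> = X B^-1 (X(0)^T J dZ(0)/d\<kappa> + 4k^3 int_0^x (f_a1 Z1)_a),  which only requires
  \<kappa>-differentiability of the initial values.  Thus column  l  of  \<Omega> = X^-1 dX/d\<kappa>  is  B^-1  applied to
  a constant plus  4k^3 int_0^x (f_a1 f_l1)_a,  and its  x-derivative is
  4k^3 (B^-1 X^T J)_j4 f_l1 = 4k^3 \<Gamma>_j4 f_l1.
  The product rule behind Lagrange's identity holds for absolutely continuous functions by Fubini.
\<close>

section \<open>Products of indefinite integrals\<close>

lemma sigma_finite_lebesgue: "sigma_finite_measure (lebesgue :: real measure)"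
proof
  let ?A = "range (\<lambda>n::nat. {-real n..real n})"
  have "\<exists>n::nat. x \<in> {-real n..real n}" for x :: real
  proof -
    obtain n :: nat where "\<bar>x\<bar> \<le> real n" using real_arch_simple by blast
    then show ?thesis by (intro exI[of _ n]) auto
  qed
  then show "\<exists>A. countable A \<and> A \<subseteq> sets (lebesgue :: real measure) \<and> \<Union> A = space lebesgue
      \<and> (\<forall>a\<in>A. emeasure lebesgue a \<noteq> \<infinity>)"
    by (intro exI[of _ ?A]) (auto simp: fmeasurable_def)
qed

interpretation lebesgue_pair: pair_sigma_finite "lebesgue :: real measure" "lebesgue :: real measure"
  by (intro pair_sigma_finite.intro sigma_finite_lebesgue)

lemma measurable_ident_lebesgue [measurable]: "(\<lambda>x::real. x) \<in> borel_measurable lebesgue"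
  by (rule measurable_completion) simp

lemma integral_eq_lebesgue_integral:
  fixes f :: "real \<Rightarrow> 'a::euclidean_space"
  assumes "f absolutely_integrable_on {a..b}"
  shows "integral {a..b} f = (\<integral>t. indicator {a..b} t *\<^sub>R f t \<partial>lebesgue)"
  using set_lebesgue_integral_eq_integral(2)[OF assms] by (simp add: set_lebesgue_integral_def)

text \<open>Fubini on the triangle  a \<le> t \<le> s \<le> b  and its complement in the square.\<close>
lemma integral_mult_indefinite_integral:
  fixes g h :: "real \<Rightarrow> complex"
  assumes g: "g absolutely_integrable_on {a..b}" and h: "h absolutely_integrable_on {a..b}"
  shows "(\<lambda>s. g s * integral {a..s} h) absolutely_integrable_on {a..b}"
    and "(\<lambda>t. h t * integral {a..t} g) absolutely_integrable_on {a..b}"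
    and "integral {a..b} (\<lambda>s. g s * integral {a..s} h) + integral {a..b} (\<lambda>t. h t * integral {a..t} g)
       = integral {a..b} g * integral {a..b} h"
proof -
  define G where "G = (\<lambda>s. indicator {a..b} s *\<^sub>R g s)"
  define H where "H = (\<lambda>t. indicator {a..b} t *\<^sub>R h t)"
  have Gi: "integrable lebesgue G" and Hi: "integrable lebesgue H"
    using g h by (simp_all add: set_integrable_def G_def H_def)
  have [measurable]: "G \<in> borel_measurable lebesgue" "H \<in> borel_measurable lebesgue"
    using Gi Hi by (simp_all add: borel_measurable_integrable)
  define F where "F s t = G s * H t" for s t
  define F1 where "F1 s t = G s * H t * of_bool (t \<le> s)" for s t
  define F2 where "F2 s t = G s * H t * of_bool (s < t)" for s t
  have Fm: "case_prod F \<in> borel_measurable (lebesgue \<Otimes>\<^sub>M lebesgue)" unfolding F_def by measurable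
  have F1m: "case_prod F1 \<in> borel_measurable (lebesgue \<Otimes>\<^sub>M lebesgue)" unfolding F1_def by measurable
  have F2m: "case_prod F2 \<in> borel_measurable (lebesgue \<Otimes>\<^sub>M lebesgue)" unfolding F2_def by measurable
  have Fi: "integrable (lebesgue \<Otimes>\<^sub>M lebesgue) (case_prod F)"
  proof (rule lebesgue_pair.Fubini_integrable[OF Fm])
    have "(\<lambda>s. \<integral>t. norm (case_prod F (s, t)) \<partial>lebesgue) = (\<lambda>s. norm (G s) * (\<integral>t. norm (H t) \<partial>lebesgue))"
      by (simp add: F_def norm_mult)
    then show "integrable lebesgue (\<lambda>s. \<integral>t. norm (case_prod F (s, t)) \<partial>lebesgue)"
      using Gi by simp
    show "AE s in lebesgue. integrable lebesgue (\<lambda>t. case_prod F (s, t))"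
      using Hi by (simp add: F_def)
  qed
  have F1i: "integrable (lebesgue \<Otimes>\<^sub>M lebesgue) (case_prod F1)"
    by (rule Bochner_Integration.integrable_bound[OF Fi F1m]) (auto simp: F_def F1_def norm_mult)
  have F2i: "integrable (lebesgue \<Otimes>\<^sub>M lebesgue) (case_prod F2)"
    by (rule Bochner_Integration.integrable_bound[OF Fi F2m]) (auto simp: F_def F2_def norm_mult)
  have sub: "f absolutely_integrable_on {a..s}" if "f absolutely_integrable_on {a..b}" "s \<in> {a..b}"
    for f :: "real \<Rightarrow> complex" and s
    by (rule set_integrable_subset[OF that(1)]) (use that(2) in auto)
  define A1 where "A1 = (\<lambda>s. indicator {a..b} s *\<^sub>R (g s * integral {a..s} h))"
  define A2 where "A2 = (\<lambda>t. indicator {a..b} t *\<^sub>R (h t * integral {a..t} g))"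
  have in1: "(\<integral>t. F1 s t \<partial>lebesgue) = A1 s" for s
  proof (cases "s \<in> {a..b}")
    case True
    have "(\<integral>t. F1 s t \<partial>lebesgue) = G s * (\<integral>t. H t * of_bool (t \<le> s) \<partial>lebesgue)"
      unfolding F1_def mult.assoc by (rule integral_mult_right_zero)
    also have "(\<lambda>t. H t * of_bool (t \<le> s)) = (\<lambda>t. indicator {a..s} t *\<^sub>R h t)"
      using True by (auto simp: H_def fun_eq_iff indicator_def)
    also have "(\<integral>t. indicator {a..s} t *\<^sub>R h t \<partial>lebesgue) = integral {a..s} h"
      using integral_eq_lebesgue_integral[OF sub[OF h True]] by simp
    finally show ?thesis using True by (simp add: A1_def G_def)
  qed (simp add: A1_def F1_def G_def)
  have in2: "(\<integral>s. F2 s t \<partial>lebesgue) = A2 t" for t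
  proof (cases "t \<in> {a..b}")
    case True
    have "(\<integral>s. F2 s t \<partial>lebesgue) = (\<integral>s. G s * of_bool (s < t) \<partial>lebesgue) * H t"
      unfolding F2_def by (subst integral_mult_left_zero[symmetric]) (simp add: ac_simps)
    also have "(\<integral>s. G s * of_bool (s < t) \<partial>lebesgue) = (\<integral>s. indicator {a..t} s *\<^sub>R g s \<partial>lebesgue)"
    proof (rule integral_cong_AE)
      show "(\<lambda>s. G s * of_bool (s < t)) \<in> borel_measurable lebesgue" by measurable
      show "(\<lambda>s. indicator {a..t} s *\<^sub>R g s) \<in> borel_measurable lebesgue"
        using sub[OF g True] unfolding set_integrable_def by (rule borel_measurable_integrable)
      have "AE s in lebesgue. s \<noteq> t"
        by (rule AE_completion[OF AE_lborel_singleton])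
      then show "AE s in lebesgue. G s * of_bool (s < t) = indicator {a..t} s *\<^sub>R g s"
        by eventually_elim (use True in \<open>auto simp: G_def indicator_def\<close>)
    qed
    also have "(\<integral>s. indicator {a..t} s *\<^sub>R g s \<partial>lebesgue) = integral {a..t} g"
      using integral_eq_lebesgue_integral[OF sub[OF g True]] by simp
    finally show ?thesis using True by (simp add: A2_def H_def mult.commute)
  qed (simp add: A2_def F2_def H_def)
  have "integrable lebesgue A1" "integrable lebesgue A2"
    using lebesgue_pair.integrable_fst[OF F1i] lebesgue_pair.integrable_snd[OF F2i] in1 in2 by simp_all
  then show A1: "(\<lambda>s. g s * integral {a..s} h) absolutely_integrable_on {a..b}"
    and A2: "(\<lambda>t. h t * integral {a..t} g) absolutely_integrable_on {a..b}"
    by (simp_all add: A1_def A2_def set_integrable_def)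
  have "integral\<^sup>L (lebesgue \<Otimes>\<^sub>M lebesgue) (case_prod F)
     = integral\<^sup>L (lebesgue \<Otimes>\<^sub>M lebesgue) (case_prod F1) + integral\<^sup>L (lebesgue \<Otimes>\<^sub>M lebesgue) (case_prod F2)"
    by (subst Bochner_Integration.integral_add[OF F1i F2i, symmetric])
       (auto simp: F_def F1_def F2_def intro!: arg_cong[where f="integral\<^sup>L _"])
  moreover have "integral\<^sup>L (lebesgue \<Otimes>\<^sub>M lebesgue) (case_prod F) = integral\<^sup>L lebesgue G * integral\<^sup>L lebesgue H"
    using lebesgue_pair.integral_fst[OF Fi] by (simp add: F_def[abs_def])
  ultimately show "integral {a..b} (\<lambda>s. g s * integral {a..s} h) + integral {a..b} (\<lambda>t. h t * integral {a..t} g)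
       = integral {a..b} g * integral {a..b} h"
    using lebesgue_pair.integral_fst[OF F1i] lebesgue_pair.integral_snd[OF F2i] in1 in2
      integral_eq_lebesgue_integral[OF g] integral_eq_lebesgue_integral[OF h]
      integral_eq_lebesgue_integral[OF A1] integral_eq_lebesgue_integral[OF A2]
    by (simp add: G_def H_def A1_def A2_def)
qed

lemma indefinite_integral_product_rule:
  fixes g h u v :: "real \<Rightarrow> complex"
  assumes "a \<le> b"
    and g: "g absolutely_integrable_on {a..b}" and h: "h absolutely_integrable_on {a..b}"
    and u: "\<And>t. t \<in> {a..b} \<Longrightarrow> u t = u a + integral {a..t} g"
    and v: "\<And>t. t \<in> {a..b} \<Longrightarrow> v t = v a + integral {a..t} h"
  shows "(\<lambda>t. g t * v t + u t * h t) integrable_on {a..b}"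
    and "u b * v b = u a * v a + integral {a..b} (\<lambda>t. g t * v t + u t * h t)"
proof -
  note P = integral_mult_indefinite_integral[OF g h]
  have gi: "g integrable_on {a..b}" and hi: "h integrable_on {a..b}"
    and i1: "(\<lambda>s. g s * integral {a..s} h) integrable_on {a..b}"
    and i2: "(\<lambda>s. h s * integral {a..s} g) integrable_on {a..b}"
    using g h P(1,2) by (simp_all add: set_lebesgue_integral_eq_integral(1))
  define E where "E t = v a * g t + g t * integral {a..t} h + (u a * h t + h t * integral {a..t} g)" for t
  have eq: "g t * v t + u t * h t = E t" if "t \<in> {a..b}" for t
    using u[OF that] v[OF that] by (simp add: E_def algebra_simps)
  have Ei: "E integrable_on {a..b}"
    unfolding E_def by (intro integrable_add integrable_on_mult_right i1 i2 gi hi)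
  then show "(\<lambda>t. g t * v t + u t * h t) integrable_on {a..b}"
    using integrable_cong[of "{a..b}" _ E, OF eq] by simp
  have "integral {a..b} (\<lambda>t. g t * v t + u t * h t) = integral {a..b} E"
    using eq by (rule integral_cong)
  also have "\<dots> = v a * integral {a..b} g + integral {a..b} (\<lambda>s. g s * integral {a..s} h)
      + (u a * integral {a..b} h + integral {a..b} (\<lambda>s. h s * integral {a..s} g))"
    unfolding E_def by (simp add: integral_add integrable_add integrable_on_mult_right i1 i2 gi hi)
  finally show "u b * v b = u a * v a + integral {a..b} (\<lambda>t. g t * v t + u t * h t)"
    using u[of b] v[of b] P(3) \<open>a \<le> b\<close> by (simp add: algebra_simps)
qed

lemma norm_integral_mult_le:
  fixes f Z :: "real \<Rightarrow> 'a::{real_normed_algebra,banach}"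
  assumes s: "s \<in> {0..T}" and f: "continuous_on {0..T} f" and Z: "continuous_on {0..T} Z"
    and M: "\<And>\<sigma>. \<sigma> \<in> {0..T} \<Longrightarrow> norm (Z \<sigma>) \<le> M"
  shows "norm (integral {0..s} (\<lambda>\<sigma>. f \<sigma> * Z \<sigma>)) \<le> integral {0..T} (\<lambda>\<sigma>. norm (f \<sigma>)) * M"
proof -
  have sub: "{0..s} \<subseteq> {0..T}" using s by auto
  have f': "continuous_on {0..s} f" and Z': "continuous_on {0..s} Z"
    using continuous_on_subset[OF f sub] continuous_on_subset[OF Z sub] by auto
  have "0 \<le> M" using M[of 0] s by (auto intro: order_trans[OF norm_ge_zero])
  have "norm (integral {0..s} (\<lambda>\<sigma>. f \<sigma> * Z \<sigma>)) \<le> integral {0..s} (\<lambda>\<sigma>. norm (f \<sigma>) * M)"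
  proof (rule integral_norm_bound_integral)
    show "(\<lambda>\<sigma>. f \<sigma> * Z \<sigma>) integrable_on {0..s}" "(\<lambda>\<sigma>. norm (f \<sigma>) * M) integrable_on {0..s}"
      by (intro integrable_continuous_interval continuous_intros f' Z')+
    show "norm (f \<sigma> * Z \<sigma>) \<le> norm (f \<sigma>) * M" if "\<sigma> \<in> {0..s}" for \<sigma>
      using M[of \<sigma>] that sub norm_mult_ineq[of "f \<sigma>" "Z \<sigma>"]
      by (meson mult_left_mono norm_ge_zero order_trans subsetD)
  qed
  also have "\<dots> \<le> integral {0..T} (\<lambda>\<sigma>. norm (f \<sigma>)) * M"
    using \<open>0 \<le> M\<close> by (auto intro!: mult_right_mono integral_subset_le[OF sub]
        integrable_continuous_interval continuous_on_norm f f')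
  finally show ?thesis .
qed

section \<open>Matrix estimates and inverses\<close>

definition l1_norm :: "'a::real_normed_field^'n \<Rightarrow> real" where
  "l1_norm v = (\<Sum>i\<in>UNIV. norm (v $ i))"

definition entrywise_l1_norm :: "'a::real_normed_field^'n^'m \<Rightarrow> real" where
  "entrywise_l1_norm A = (\<Sum>i\<in>UNIV. \<Sum>j\<in>UNIV. norm (A $ i $ j))"

lemma l1_norm_nonneg: "0 \<le> l1_norm v"
  by (simp add: l1_norm_def sum_nonneg)

lemma entrywise_l1_norm_nonneg: "0 \<le> entrywise_l1_norm A"
  by (simp add: entrywise_l1_norm_def sum_nonneg)

lemma norm_nth_le_l1_norm: "norm (v $ i) \<le> l1_norm v"
  unfolding l1_norm_def by (rule member_le_sum) auto

lemma l1_norm_triangle: "l1_norm (v + w) \<le> l1_norm v + l1_norm w"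
  unfolding l1_norm_def sum.distrib[symmetric] by (rule sum_mono) (simp add: norm_triangle_ineq)

lemma l1_norm_scalar_mult: "l1_norm (c *s v) = norm c * l1_norm v"
  by (simp add: l1_norm_def norm_mult sum_distrib_left)

lemma l1_norm_matrix_vector_mult_le: "l1_norm (A *v v) \<le> entrywise_l1_norm A * l1_norm v"
proof -
  have "l1_norm (A *v v) = (\<Sum>i\<in>UNIV. norm (\<Sum>j\<in>UNIV. A$i$j * v$j))"
    by (simp add: l1_norm_def matrix_vector_mult_def)
  also have "\<dots> \<le> (\<Sum>i\<in>UNIV. \<Sum>j\<in>UNIV. norm (A$i$j) * l1_norm v)"
    by (intro sum_mono order.trans[OF norm_sum])
       (simp add: norm_mult mult_left_mono norm_nth_le_l1_norm)
  also have "\<dots> = entrywise_l1_norm A * l1_norm v"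
    by (simp add: entrywise_l1_norm_def sum_distrib_right)
  finally show ?thesis .
qed

lemma l1_norm_affine_image_le:
  assumes "entrywise_l1_norm A \<le> C" "l1_norm I \<le> B"
  shows "l1_norm (A *v (w + c *s I)) \<le> C * (l1_norm w + norm c * B)"
proof -
  have "l1_norm (A *v (w + c *s I)) \<le> entrywise_l1_norm A * l1_norm (w + c *s I)"
    by (rule l1_norm_matrix_vector_mult_le)
  also have "\<dots> \<le> C * (l1_norm w + norm c * B)"
  proof (rule mult_mono)
    have "l1_norm (w + c *s I) \<le> l1_norm w + norm c * l1_norm I"
      using l1_norm_triangle[of w "c *s I"] by (simp add: l1_norm_scalar_mult)
    then show "l1_norm (w + c *s I) \<le> l1_norm w + norm c * B"
      using assms(2) by (meson add_left_mono mult_left_mono norm_ge_zero order_trans)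
  qed (use assms(1) order_trans[OF entrywise_l1_norm_nonneg assms(1)] l1_norm_nonneg in auto)
  finally show ?thesis .
qed

lemma invertible_transpose:
  fixes A :: "'a::field^'n^'n"
  assumes "invertible A"
  shows "invertible (transpose A)"
  using assms unfolding invertible_def by (metis matrix_transpose_mul transpose_mat)

lemma matrix_inv:
  fixes A :: "'a::semiring_1^'n^'n"
  assumes "invertible A"
  shows matrix_inv_left: "matrix_inv A ** A = mat 1"
    and matrix_inv_right: "A ** matrix_inv A = mat 1"
proof -
  have "\<exists>A'. A ** A' = mat 1 \<and> A' ** A = mat 1" using assms unfolding invertible_def by blast
  then have "A ** matrix_inv A = mat 1 \<and> matrix_inv A ** A = mat 1"
    unfolding matrix_inv_def by (rule someI_ex)
  then show "matrix_inv A ** A = mat 1" "A ** matrix_inv A = mat 1" by auto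
qed

section \<open>The quasi-derivative system and Lagrange's identity\<close>

lemma qrhs_nth [simp]:
  "qrhs p q k t Y $ 1 = Y$2" "qrhs p q k t Y $ 2 = Y$3"
  "qrhs p q k t Y $ 3 = Y$4 - 2 * complex_of_real (p t) * Y$2"
  "qrhs p q k t Y $ 4 = (k^4 - complex_of_real (q t)) * Y$1"
  by (simp_all add: qrhs_def)

lemma qsol_nth:
  assumes "qsol p q k Y" "0 \<le> x"
  shows "(\<lambda>t. qrhs p q k t (Y t) $ i) absolutely_integrable_on {0..x}"
    and "Y x $ i = Y 0 $ i + integral {0..x} (\<lambda>t. qrhs p q k t (Y t) $ i)"
proof -
  have a: "(\<lambda>t. qrhs p q k t (Y t)) absolutely_integrable_on {0..x}"
    and e: "Y x = Y 0 + integral {0..x} (\<lambda>t. qrhs p q k t (Y t))"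
    using assms unfolding qsol_def by blast+
  show "(\<lambda>t. qrhs p q k t (Y t) $ i) absolutely_integrable_on {0..x}"
    using absolutely_integrable_linear[OF a bounded_linear_vec_nth[of i]] by (simp add: o_def)
  have "integral {0..x} (\<lambda>t. qrhs p q k t (Y t) $ i) = integral {0..x} (\<lambda>t. qrhs p q k t (Y t)) $ i"
    using integral_linear[OF set_lebesgue_integral_eq_integral(1)[OF a] bounded_linear_vec_nth[of i]]
    by (simp add: o_def)
  with e show "Y x $ i = Y 0 $ i + integral {0..x} (\<lambda>t. qrhs p q k t (Y t) $ i)"
    by simp
qed

lemma qsol_continuous_on:
  assumes "qsol p q k Y" "0 \<le> T"
  shows "continuous_on {0..T} (\<lambda>t. Y t $ i)"
proof -
  have "(\<lambda>t. qrhs p q k t (Y t) $ i) integrable_on {0..T}"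
    using qsol_nth(1)[OF assms] by (rule set_lebesgue_integral_eq_integral(1))
  then have "continuous_on {0..T} (\<lambda>t. Y 0 $ i + integral {0..t} (\<lambda>t. qrhs p q k t (Y t) $ i))"
    by (intro continuous_on_add continuous_on_const indefinite_integral_continuous_1)
  then show ?thesis
    by (rule continuous_on_eq) (simp add: qsol_nth(2)[OF assms(1), symmetric])
qed

definition qbracket :: "complex^4 \<Rightarrow> complex^4 \<Rightarrow> complex" where
  "qbracket Y Z = Y$1 * Z$4 - Y$2 * Z$3 + Y$3 * Z$2 - Y$4 * Z$1"

text \<open>Lagrange's identity: in the derivative of the bracket the terms with  p  and  q  cancel.\<close>
lemma qbracket_qsol:
  assumes Y: "qsol p q k Y" and Z: "qsol p q \<kappa> Z" and x: "0 \<le> x"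
  shows "qbracket (Y x) (Z x) = qbracket (Y 0) (Z 0) + (\<kappa>^4 - k^4) * integral {0..x} (\<lambda>t. Y t $ 1 * Z t $ 1)"
proof -
  define a where "a i t = qrhs p q k t (Y t) $ i" for i t
  define b where "b i t = qrhs p q \<kappa> t (Z t) $ i" for i t
  have ye: "Y t $ i = Y 0 $ i + integral {0..t} (a i)" and ze: "Z t $ i = Z 0 $ i + integral {0..t} (b i)"
    if "t \<in> {0..x}" for i t
    unfolding a_def b_def using that by (auto intro!: qsol_nth(2)[OF Y] qsol_nth(2)[OF Z])
  note PR = indefinite_integral_product_rule[OF x qsol_nth(1)[OF Y x] qsol_nth(1)[OF Z x],
      folded a_def b_def, OF ye ze]
  define e where "e i j t = a i t * Z t $ j + Y t $ i * b j t" for i j t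
  have ei: "e i j integrable_on {0..x}" for i j
    unfolding e_def by (rule PR(1))
  have ee: "Y x $ i * Z x $ j = Y 0 $ i * Z 0 $ j + integral {0..x} (e i j)" for i j
    unfolding e_def by (rule PR(2))
  have pt: "e 1 4 t - e 2 3 t + e 3 2 t - e 4 1 t = (\<kappa>^4 - k^4) * (Y t $ 1 * Z t $ 1)" for t
    unfolding e_def a_def b_def qrhs_nth by algebra
  have "integral {0..x} (e 1 4) - integral {0..x} (e 2 3) + integral {0..x} (e 3 2) - integral {0..x} (e 4 1)
     = integral {0..x} (\<lambda>t. e 1 4 t - e 2 3 t + e 3 2 t - e 4 1 t)"
    by (simp add: integral_add integral_diff integrable_add integrable_diff ei)
  also have "\<dots> = (\<kappa>^4 - k^4) * integral {0..x} (\<lambda>t. Y t $ 1 * Z t $ 1)"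
    unfolding pt by simp
  finally show ?thesis
    unfolding qbracket_def ee by (simp add: algebra_simps)
qed

definition Jmat :: "complex^4^4" where
  "Jmat = (\<chi> i j. if i = 1 \<and> j = 4 then 1 else if i = 2 \<and> j = 3 then -1
        else if i = 3 \<and> j = 2 then 1 else if i = 4 \<and> j = 1 then -1 else 0)"

lemma invertible_Jmat: "invertible Jmat"
proof -
  have "Jmat ** (- Jmat) = mat 1" "(- Jmat) ** Jmat = mat 1"
    by (simp_all add: vec_eq_iff forall_4 matrix_matrix_mult_def sum_4 Jmat_def mat_def)
  then show ?thesis unfolding invertible_def by blast
qed

section \<open>A fundamental system at a fixed spectral parameter\<close>

lemma matrix_mult_Xmat_nth: "(A ** Xmat F t k) $ a $ b = (A *v F b t k) $ a"
  by (simp add: matrix_matrix_mult_def matrix_vector_mult_def Xmat_def)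

locale fundamental_system =
  fixes p q :: "real \<Rightarrow> real" and F :: "4 \<Rightarrow> real \<Rightarrow> complex \<Rightarrow> complex^4" and k :: complex
  assumes solves: "\<And>c. qsol p q k (\<lambda>t. F c t k)"
    and invertible_Xmat: "\<And>t. 0 \<le> t \<Longrightarrow> invertible (Xmat F t k)"
begin

definition bracket_matrix :: "real \<Rightarrow> complex^4^4" where
  "bracket_matrix t = transpose (Xmat F t k) ** Jmat"

definition Bmat :: "complex^4^4" where
  "Bmat = bracket_matrix 0 ** Xmat F 0 k"

definition Rmat :: "real \<Rightarrow> complex^4^4" where
  "Rmat t = Xmat F t k ** matrix_inv Bmat"

definition weighted_integral :: "(real \<Rightarrow> complex^4) \<Rightarrow> real \<Rightarrow> complex^4" where
  "weighted_integral Z t = (\<chi> a. integral {0..t} (\<lambda>s. F a s k $ 1 * Z s $ 1))"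

lemma bracket_matrix_mult_vec: "(bracket_matrix t *v Z) $ a = qbracket (F a t k) Z"
  by (simp add: bracket_matrix_def matrix_vector_mult_def matrix_matrix_mult_def transpose_def Xmat_def
      Jmat_def qbracket_def sum_4 algebra_simps)

lemma bracket_matrix_nth_4: "bracket_matrix t $ a $ 4 = F a t k $ 1"
  by (simp add: bracket_matrix_def matrix_matrix_mult_def transpose_def Xmat_def Jmat_def sum_4)

lemma bracket_matrix_mult_Xmat:
  assumes "0 \<le> t"
  shows "bracket_matrix t ** Xmat F t k = Bmat"
proof -
  have "qbracket (F a t k) (F b t k) = qbracket (F a 0 k) (F b 0 k)" for a b
    using qbracket_qsol[OF solves solves assms] by simp
  then show ?thesis
    by (simp add: Bmat_def vec_eq_iff matrix_mult_Xmat_nth bracket_matrix_mult_vec)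
qed

lemma invertible_Bmat: "invertible Bmat"
  unfolding Bmat_def bracket_matrix_def
  by (intro invertible_mult invertible_transpose invertible_Xmat invertible_Jmat) simp_all

lemma matrix_inv_Xmat:
  assumes "0 \<le> t"
  shows "matrix_inv (Xmat F t k) = matrix_inv Bmat ** bracket_matrix t"
proof -
  have "matrix_inv Bmat ** bracket_matrix t
      = matrix_inv Bmat ** (bracket_matrix t ** (Xmat F t k ** matrix_inv (Xmat F t k)))"
    by (simp add: matrix_inv_right[OF invertible_Xmat[OF assms]])
  also have "\<dots> = (matrix_inv Bmat ** Bmat) ** matrix_inv (Xmat F t k)"
    by (simp add: matrix_mul_assoc bracket_matrix_mult_Xmat[OF assms])
  finally show ?thesis
    by (simp add: matrix_inv_left[OF invertible_Bmat])
qed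

lemma Gmat_nth_4:
  assumes "0 \<le> t"
  shows "Gmat F t k $ j $ 4 = (\<Sum>a\<in>UNIV. matrix_inv Bmat $ j $ a * F a t k $ 1)"
  by (simp add: Gmat_def matrix_inv_Xmat[OF assms] matrix_matrix_mult_def bracket_matrix_nth_4)

text \<open>Variation of constants, obtained from Lagrange's identity with every column of  X.\<close>
lemma solution_representation:
  assumes Z: "qsol p q \<kappa> Z" and t: "0 \<le> t"
  shows "Z t = Rmat t *v (bracket_matrix 0 *v Z 0 + (\<kappa>^4 - k^4) *s weighted_integral Z t)"
proof -
  have rep: "bracket_matrix t *v Z t = bracket_matrix 0 *v Z 0 + (\<kappa>^4 - k^4) *s weighted_integral Z t"
    using qbracket_qsol[OF solves Z t]
    by (simp add: vec_eq_iff bracket_matrix_mult_vec weighted_integral_def left_diff_distrib)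
  have "Z t = (Xmat F t k ** matrix_inv (Xmat F t k)) *v Z t"
    by (simp add: matrix_inv_right[OF invertible_Xmat[OF t]])
  also have "\<dots> = Rmat t *v (bracket_matrix t *v Z t)"
    by (simp add: Rmat_def matrix_inv_Xmat[OF t] matrix_vector_mul_assoc matrix_mul_assoc)
  finally show ?thesis
    by (simp only: rep)
qed

lemma solution_representation_diff:
  assumes "qsol p q \<kappa> (\<lambda>t. Y t \<kappa>)" "qsol p q k (\<lambda>t. Y t k)" "0 \<le> s"
  shows "Y s \<kappa> - Y s k
    = Rmat s *v (bracket_matrix 0 *v (Y 0 \<kappa> - Y 0 k) + (\<kappa>^4 - k^4) *s weighted_integral (\<lambda>t. Y t \<kappa>) s)"
  using solution_representation[OF assms(1,3)] solution_representation[OF assms(2,3)]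
  by (simp add: matrix_vector_mult_diff_distrib matrix_vector_right_distrib algebra_simps)

subsection \<open>Dependence of solutions on the spectral parameter\<close>

definition kernel_mass :: "real \<Rightarrow> real" where
  "kernel_mass T = (\<Sum>a\<in>UNIV. integral {0..T} (\<lambda>\<sigma>. norm (F a \<sigma> k $ 1)))"

lemma Rmat_bounded:
  assumes "0 \<le> T"
  obtains C where "0 \<le> C" and "\<And>s. s \<in> {0..T} \<Longrightarrow> entrywise_l1_norm (Rmat s) \<le> C"
proof -
  have "(\<lambda>s. entrywise_l1_norm (Rmat s))
      = (\<lambda>s. \<Sum>i\<in>UNIV. \<Sum>j\<in>UNIV. norm (\<Sum>c\<in>UNIV. F c s k $ i * matrix_inv Bmat $ c $ j))"
    by (simp add: entrywise_l1_norm_def Rmat_def matrix_matrix_mult_def Xmat_def)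
  then have cont: "continuous_on {0..T} (\<lambda>s. entrywise_l1_norm (Rmat s))"
    by (simp only:) (intro continuous_on_sum continuous_on_norm continuous_on_mult_right
        qsol_continuous_on[OF solves assms])
  obtain s0 where "\<forall>s\<in>{0..T}. entrywise_l1_norm (Rmat s) \<le> entrywise_l1_norm (Rmat s0)"
    using continuous_attains_sup[OF compact_Icc _ cont] assms by auto
  then show thesis
    using that entrywise_l1_norm_nonneg by blast
qed

lemma weighted_integral_bound:
  assumes s: "s \<in> {0..T}" and Z: "continuous_on {0..T} (\<lambda>\<sigma>. Z \<sigma> $ 1)"
    and M: "\<And>\<sigma>. \<sigma> \<in> {0..T} \<Longrightarrow> norm (Z \<sigma> $ 1) \<le> M"
  shows "l1_norm (weighted_integral Z s) \<le> kernel_mass T * M"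
proof -
  have "l1_norm (weighted_integral Z s) = (\<Sum>a\<in>UNIV. norm (integral {0..s} (\<lambda>\<sigma>. F a \<sigma> k $ 1 * Z \<sigma> $ 1)))"
    by (simp add: l1_norm_def weighted_integral_def)
  also have "\<dots> \<le> (\<Sum>a\<in>UNIV. integral {0..T} (\<lambda>\<sigma>. norm (F a \<sigma> k $ 1)) * M)"
    using s by (intro sum_mono norm_integral_mult_le[OF s qsol_continuous_on[OF solves] Z M]) simp
  finally show ?thesis
    by (simp add: kernel_mass_def sum_distrib_right)
qed

lemma weighted_integral_diff:
  assumes "continuous_on {0..T} (\<lambda>\<sigma>. Y \<sigma> $ 1)" "continuous_on {0..T} (\<lambda>\<sigma>. Z \<sigma> $ 1)" "0 \<le> T"
  shows "weighted_integral Y T - weighted_integral Z T = weighted_integral (\<lambda>\<sigma>. Y \<sigma> - Z \<sigma>) T"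
proof -
  have i: "(\<lambda>\<sigma>. F a \<sigma> k $ 1 * W \<sigma> $ 1) integrable_on {0..T}" if "continuous_on {0..T} (\<lambda>\<sigma>. W \<sigma> $ 1)" for a W
    by (intro integrable_continuous_interval continuous_on_mult that qsol_continuous_on[OF solves \<open>0 \<le> T\<close>])
  show ?thesis
    by (simp add: weighted_integral_def vec_eq_iff right_diff_distrib integral_diff[OF i[OF assms(1)] i[OF assms(2)]])
qed

lemma has_vector_derivative_weighted_integral:
  assumes Z: "qsol p q \<kappa> Z" and x: "0 \<le> x"
  shows "((\<lambda>t. weighted_integral Z t $ a) has_vector_derivative F a x k $ 1 * Z x $ 1) (at x within {0..})"
proof -
  have "((\<lambda>t. weighted_integral Z t $ a) has_vector_derivative F a x k $ 1 * Z x $ 1) (at x within {0..x+1})"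
    unfolding weighted_integral_def vec_lambda_beta using x
    by (intro integral_has_vector_derivative continuous_on_mult qsol_continuous_on[OF solves]
        qsol_continuous_on[OF Z]) auto
  moreover have "at x within {0..x+1} = at x within {0..}"
    by (rule at_within_nhd[where S="{..<x+1}"]) auto
  ultimately show ?thesis by simp
qed

context
  fixes U :: "complex set" and Y :: "real \<Rightarrow> complex \<Rightarrow> complex^4" and T :: real
  assumes open_U: "open U" and k_in_U: "k \<in> U"
    and Y_solves: "\<And>\<kappa>. \<kappa> \<in> U \<Longrightarrow> qsol p q \<kappa> (\<lambda>t. Y t \<kappa>)"
    and Y0_continuous: "\<And>m. isCont (\<lambda>\<kappa>. Y 0 \<kappa> $ m) k"
    and T_nonneg: "0 \<le> T"
begin

lemma solution_family_continuous_on: "\<kappa> \<in> U \<Longrightarrow> continuous_on {0..T} (\<lambda>s. Y s \<kappa> $ i)"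
  using qsol_continuous_on[OF Y_solves T_nonneg] .

lemma initial_bracket_tendsto: "((\<lambda>\<kappa>. l1_norm (bracket_matrix 0 *v (Y 0 \<kappa> - Y 0 k))) \<longlongrightarrow> 0) (at k)"
proof -
  have "((\<lambda>\<kappa>. Y 0 \<kappa> $ j - Y 0 k $ j) \<longlongrightarrow> 0) (at k)" for j
    using Y0_continuous[of j] by (simp add: isCont_def LIM_zero)
  then have "((\<lambda>\<kappa>. \<Sum>i\<in>UNIV. norm (\<Sum>j\<in>UNIV. bracket_matrix 0 $ i $ j * (Y 0 \<kappa> $ j - Y 0 k $ j)))
      \<longlongrightarrow> (\<Sum>i\<in>(UNIV::4 set). norm (\<Sum>j\<in>(UNIV::4 set). bracket_matrix 0 $ i $ j * 0))) (at k)"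
    by (intro tendsto_intros)
  then show ?thesis
    by (simp add: l1_norm_def matrix_vector_mult_def)
qed

text \<open>Near  k  the factor  \<kappa>^4 - k^4  in the representation of solutions is small, so the
  supremum of  Y(\<cdot>, \<kappa>)  over  [0, T]  can be absorbed into the left-hand side.\<close>
lemma solution_family_locally_bounded:
  obtains M where "\<forall>\<^sub>F \<kappa> in at k. \<forall>s\<in>{0..T}. l1_norm (Y s \<kappa>) \<le> M"
proof -
  obtain C where C0: "0 \<le> C" and C: "\<And>s. s \<in> {0..T} \<Longrightarrow> entrywise_l1_norm (Rmat s) \<le> C"
    using Rmat_bounded[OF T_nonneg] by blast
  define L where "L = kernel_mass T"
  define w where "w \<kappa> = bracket_matrix 0 *v Y 0 \<kappa>" for \<kappa>
  have sup_bound: "\<exists>M. (\<forall>s\<in>{0..T}. l1_norm (Y s \<kappa>) \<le> M) \<and> M \<le> C * (l1_norm (w \<kappa>) + norm (\<kappa>^4 - k^4) * (L * M))"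
    if \<kappa>: "\<kappa> \<in> U" for \<kappa>
  proof -
    have cont: "continuous_on {0..T} (\<lambda>s. l1_norm (Y s \<kappa>))"
      unfolding l1_norm_def by (intro continuous_on_sum continuous_on_norm solution_family_continuous_on[OF \<kappa>])
    obtain s1 where s1: "s1 \<in> {0..T}" "\<forall>s\<in>{0..T}. l1_norm (Y s \<kappa>) \<le> l1_norm (Y s1 \<kappa>)"
      using continuous_attains_sup[OF compact_Icc _ cont] T_nonneg by auto
    have "norm (Y \<sigma> \<kappa> $ 1) \<le> l1_norm (Y s1 \<kappa>)" if "\<sigma> \<in> {0..T}" for \<sigma>
      using order_trans[OF norm_nth_le_l1_norm s1(2)[rule_format, OF that]] .
    then have "l1_norm (weighted_integral (\<lambda>t. Y t \<kappa>) s1) \<le> L * l1_norm (Y s1 \<kappa>)"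
      unfolding L_def by (rule weighted_integral_bound[OF s1(1) solution_family_continuous_on[OF \<kappa>]])
    then have "l1_norm (Rmat s1 *v (w \<kappa> + (\<kappa>^4 - k^4) *s weighted_integral (\<lambda>t. Y t \<kappa>) s1))
        \<le> C * (l1_norm (w \<kappa>) + norm (\<kappa>^4 - k^4) * (L * l1_norm (Y s1 \<kappa>)))"
      by (rule l1_norm_affine_image_le[OF C[OF s1(1)]])
    then have "l1_norm (Y s1 \<kappa>) \<le> C * (l1_norm (w \<kappa>) + norm (\<kappa>^4 - k^4) * (L * l1_norm (Y s1 \<kappa>)))"
      using solution_representation[OF Y_solves[OF \<kappa>], of s1] s1(1) by (simp add: w_def)
    with s1 show ?thesis by blast
  qed
  have "((\<lambda>\<kappa>. C * (norm (\<kappa>^4 - k^4) * L)) \<longlongrightarrow> C * (norm (k^4 - k^4) * L)) (at k)"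
    by (intro tendsto_intros)
  then have small: "\<forall>\<^sub>F \<kappa> in at k. C * (norm (\<kappa>^4 - k^4) * L) < 1/2"
    by (rule order_tendstoD(2)) simp
  have "\<forall>\<^sub>F \<kappa> in at k. l1_norm (bracket_matrix 0 *v (Y 0 \<kappa> - Y 0 k)) < 1"
    by (rule order_tendstoD(2)[OF initial_bracket_tendsto]) simp
  then have close: "\<forall>\<^sub>F \<kappa> in at k. l1_norm (w \<kappa>) \<le> l1_norm (w k) + 1"
  proof (rule eventually_mono)
    fix \<kappa> assume "l1_norm (bracket_matrix 0 *v (Y 0 \<kappa> - Y 0 k)) < 1"
    moreover have "w \<kappa> = w k + bracket_matrix 0 *v (Y 0 \<kappa> - Y 0 k)"
      by (simp add: w_def matrix_vector_mult_diff_distrib)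
    ultimately show "l1_norm (w \<kappa>) \<le> l1_norm (w k) + 1"
      using l1_norm_triangle[of "w k" "bracket_matrix 0 *v (Y 0 \<kappa> - Y 0 k)"] by simp
  qed
  have "\<forall>\<^sub>F \<kappa> in at k. \<forall>s\<in>{0..T}. l1_norm (Y s \<kappa>) \<le> 2 * C * (l1_norm (w k) + 1)"
    using eventually_at_in_open'[OF open_U k_in_U] small close
  proof eventually_elim
    case (elim \<kappa>)
    obtain M where M1: "\<forall>s\<in>{0..T}. l1_norm (Y s \<kappa>) \<le> M"
      and M2: "M \<le> C * (l1_norm (w \<kappa>) + norm (\<kappa>^4 - k^4) * (L * M))"
      using sup_bound[OF elim(1)] by blast
    have "0 \<le> M" using M1 T_nonneg by (auto intro: order_trans[OF l1_norm_nonneg])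
    have "C * (norm (\<kappa>^4 - k^4) * (L * M)) = C * (norm (\<kappa>^4 - k^4) * L) * M"
      by (simp add: ac_simps)
    also have "\<dots> \<le> 1/2 * M"
      using elim(2) \<open>0 \<le> M\<close> by (intro mult_right_mono) simp_all
    finally have "C * (norm (\<kappa>^4 - k^4) * (L * M)) \<le> 1/2 * M" .
    then have "M \<le> 2 * C * l1_norm (w \<kappa>)"
      using M2 by (simp add: distrib_left)
    also have "\<dots> \<le> 2 * C * (l1_norm (w k) + 1)"
      using elim(3) C0 by (simp add: mult_left_mono)
    finally show ?case using M1 by force
  qed
  then show thesis by (rule that)
qed

lemma solution_family_uniformly_tendsto:
  obtains e where "(e \<longlongrightarrow> 0) (at k)" and "\<forall>\<^sub>F \<kappa> in at k. \<forall>s\<in>{0..T}. l1_norm (Y s \<kappa> - Y s k) \<le> e \<kappa>"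
proof -
  obtain C where C0: "0 \<le> C" and C: "\<And>s. s \<in> {0..T} \<Longrightarrow> entrywise_l1_norm (Rmat s) \<le> C"
    using Rmat_bounded[OF T_nonneg] by blast
  obtain M where M: "\<forall>\<^sub>F \<kappa> in at k. \<forall>s\<in>{0..T}. l1_norm (Y s \<kappa>) \<le> M"
    by (rule solution_family_locally_bounded)
  define e where "e \<kappa> = C * (l1_norm (bracket_matrix 0 *v (Y 0 \<kappa> - Y 0 k)) + norm (\<kappa>^4 - k^4) * (kernel_mass T * M))"
    for \<kappa>
  have "(e \<longlongrightarrow> C * (0 + norm (k^4 - k^4) * (kernel_mass T * M))) (at k)"
    unfolding e_def by (intro tendsto_intros initial_bracket_tendsto)
  then have "(e \<longlongrightarrow> 0) (at k)" by simp
  moreover have "\<forall>\<^sub>F \<kappa> in at k. \<forall>s\<in>{0..T}. l1_norm (Y s \<kappa> - Y s k) \<le> e \<kappa>"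
    using eventually_at_in_open'[OF open_U k_in_U] M
  proof eventually_elim
    case (elim \<kappa>)
    show ?case
    proof
      fix s assume s: "s \<in> {0..T}"
      have "norm (Y \<sigma> \<kappa> $ 1) \<le> M" if "\<sigma> \<in> {0..T}" for \<sigma>
        using order_trans[OF norm_nth_le_l1_norm elim(2)[rule_format, OF that]] .
      then have "l1_norm (weighted_integral (\<lambda>t. Y t \<kappa>) s) \<le> kernel_mass T * M"
        by (rule weighted_integral_bound[OF s solution_family_continuous_on[OF elim(1)]])
      moreover have "0 \<le> s" using s by simp
      ultimately show "l1_norm (Y s \<kappa> - Y s k) \<le> e \<kappa>"
        unfolding solution_representation_diff[OF Y_solves[OF elim(1)] Y_solves[OF k_in_U] \<open>0 \<le> s\<close>] e_def
        using s
        by (intro l1_norm_affine_image_le C) auto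
    qed
  qed
  ultimately show thesis by (rule that)
qed

lemma weighted_integral_family_tendsto:
  "((\<lambda>\<kappa>. weighted_integral (\<lambda>t. Y t \<kappa>) T $ a) \<longlongrightarrow> weighted_integral (\<lambda>t. Y t k) T $ a) (at k)"
proof -
  obtain e where e0: "(e \<longlongrightarrow> 0) (at k)"
    and e: "\<forall>\<^sub>F \<kappa> in at k. \<forall>s\<in>{0..T}. l1_norm (Y s \<kappa> - Y s k) \<le> e \<kappa>"
    by (rule solution_family_uniformly_tendsto)
  have "((\<lambda>\<kappa>. weighted_integral (\<lambda>t. Y t \<kappa>) T $ a - weighted_integral (\<lambda>t. Y t k) T $ a) \<longlongrightarrow> 0) (at k)"
  proof (rule Lim_null_comparison)
    show "\<forall>\<^sub>F \<kappa> in at k. norm (weighted_integral (\<lambda>t. Y t \<kappa>) T $ a - weighted_integral (\<lambda>t. Y t k) T $ a)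
        \<le> kernel_mass T * e \<kappa>"
      using eventually_at_in_open'[OF open_U k_in_U] e
    proof eventually_elim
      case (elim \<kappa>)
      have diff: "weighted_integral (\<lambda>t. Y t \<kappa>) T - weighted_integral (\<lambda>t. Y t k) T
          = weighted_integral (\<lambda>t. Y t \<kappa> - Y t k) T"
        by (rule weighted_integral_diff[OF solution_family_continuous_on[OF elim(1)]
              solution_family_continuous_on[OF k_in_U] T_nonneg])
      have "continuous_on {0..T} (\<lambda>\<sigma>. (Y \<sigma> \<kappa> - Y \<sigma> k) $ 1)"
        by (simp add: continuous_on_diff solution_family_continuous_on elim(1) k_in_U)
      moreover have "norm ((Y \<sigma> \<kappa> - Y \<sigma> k) $ 1) \<le> e \<kappa>" if "\<sigma> \<in> {0..T}" for \<sigma>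
        using order_trans[OF norm_nth_le_l1_norm elim(2)[rule_format, OF that]] .
      ultimately have "l1_norm (weighted_integral (\<lambda>t. Y t \<kappa> - Y t k) T) \<le> kernel_mass T * e \<kappa>"
        using T_nonneg by (intro weighted_integral_bound) auto
      then have "norm ((weighted_integral (\<lambda>t. Y t \<kappa>) T - weighted_integral (\<lambda>t. Y t k) T) $ a)
          \<le> kernel_mass T * e \<kappa>"
        unfolding diff by (rule order_trans[OF norm_nth_le_l1_norm])
      then show ?case by simp
    qed
    show "((\<lambda>\<kappa>. kernel_mass T * e \<kappa>) \<longlongrightarrow> 0) (at k)"
      using tendsto_mult_right_zero[OF e0] .
  qed
  then show ?thesis by (simp add: LIM_zero_iff)
qed

end

lemma solution_family_has_field_derivative:
  assumes U: "open U" "k \<in> U" and Y_solves: "\<And>\<kappa>. \<kappa> \<in> U \<Longrightarrow> qsol p q \<kappa> (\<lambda>t. Y t \<kappa>)"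
    and Y0: "\<And>j. ((\<lambda>\<kappa>. Y 0 \<kappa> $ j) has_field_derivative Y0' $ j) (at k)" and T: "0 \<le> T"
  shows "((\<lambda>\<kappa>. Y T \<kappa> $ m) has_field_derivative
      (Rmat T *v (bracket_matrix 0 *v Y0' + (4 * k^3) *s weighted_integral (\<lambda>t. Y t k) T)) $ m) (at k)"
proof -
  define B where "B = bracket_matrix 0"
  define I where "I \<kappa> = weighted_integral (\<lambda>t. Y t \<kappa>) T" for \<kappa>
  have Y0_continuous: "isCont (\<lambda>\<kappa>. Y 0 \<kappa> $ j) k" for j
    using Y0 by (rule DERIV_isCont)
  have quotient: "(Y T \<kappa> $ m - Y T k $ m) / (\<kappa> - k) = (\<Sum>i\<in>UNIV. Rmat T $ m $ i *
      ((\<Sum>j\<in>UNIV. B $ i $ j * ((Y 0 \<kappa> $ j - Y 0 k $ j) / (\<kappa> - k))) + (\<kappa>^4 - k^4) / (\<kappa> - k) * I \<kappa> $ i))"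
    if "\<kappa> \<in> U" for \<kappa>
  proof -
    have "Y T \<kappa> $ m - Y T k $ m = (\<Sum>i\<in>UNIV. Rmat T $ m $ i *
        ((\<Sum>j\<in>UNIV. B $ i $ j * (Y 0 \<kappa> $ j - Y 0 k $ j)) + (\<kappa>^4 - k^4) * I \<kappa> $ i))"
      using arg_cong[where f="\<lambda>v. v $ m", OF solution_representation_diff[OF Y_solves[OF that] Y_solves[OF U(2)] T]]
      by (simp add: B_def I_def matrix_vector_mult_def left_diff_distrib)
    then show ?thesis
      by (simp add: add_divide_distrib[symmetric] sum_divide_distrib[symmetric] left_diff_distrib)
  qed
  have Y0_quotient: "((\<lambda>\<kappa>. (Y 0 \<kappa> $ j - Y 0 k $ j) / (\<kappa> - k)) \<longlongrightarrow> Y0' $ j) (at k)" for j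
    using Y0[of j] by (simp add: has_field_derivative_iff)
  have power_quotient: "((\<lambda>\<kappa>. (\<kappa>^4 - k^4) / (\<kappa> - k)) \<longlongrightarrow> 4 * k^3) (at k)"
    using DERIV_power[OF DERIV_ident, of 4 k] by (simp add: has_field_derivative_iff)
  have I_tendsto: "((\<lambda>\<kappa>. I \<kappa> $ i) \<longlongrightarrow> I k $ i) (at k)" for i
    unfolding I_def by (rule weighted_integral_family_tendsto[OF U Y_solves Y0_continuous T])
  have "((\<lambda>\<kappa>. \<Sum>i\<in>UNIV. Rmat T $ m $ i * ((\<Sum>j\<in>UNIV. B $ i $ j * ((Y 0 \<kappa> $ j - Y 0 k $ j) / (\<kappa> - k)))
      + (\<kappa>^4 - k^4) / (\<kappa> - k) * I \<kappa> $ i))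
    \<longlongrightarrow> (\<Sum>i\<in>UNIV. Rmat T $ m $ i * ((\<Sum>j\<in>UNIV. B $ i $ j * Y0' $ j) + 4 * k^3 * I k $ i))) (at k)"
    by (intro tendsto_sum tendsto_mult tendsto_add tendsto_const Y0_quotient power_quotient I_tendsto)
  then have "((\<lambda>\<kappa>. (Y T \<kappa> $ m - Y T k $ m) / (\<kappa> - k))
      \<longlongrightarrow> (\<Sum>i\<in>UNIV. Rmat T $ m $ i * ((\<Sum>j\<in>UNIV. B $ i $ j * Y0' $ j) + 4 * k^3 * I k $ i))) (at k)"
    using eventually_mono[OF eventually_at_in_open'[OF U] quotient[symmetric]]
    by (rule Lim_transform_eventually)
  then show ?thesis
    by (simp add: has_field_derivative_iff B_def I_def matrix_vector_mult_def)
qed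

lemma Omat_nth:
  assumes U: "open U" "k \<in> U" and F_solves: "\<And>\<kappa>. \<kappa> \<in> U \<Longrightarrow> qsol p q \<kappa> (\<lambda>t. F l t \<kappa>)"
    and F0: "\<And>m. (\<lambda>\<kappa>. F l 0 \<kappa> $ m) field_differentiable at k" and t: "0 \<le> t"
  shows "Omat F t k $ j $ l = (\<Sum>a\<in>UNIV. matrix_inv Bmat $ j $ a *
    ((bracket_matrix 0 *v (\<chi> m. deriv (\<lambda>\<kappa>. F l 0 \<kappa> $ m) k)) $ a
      + 4 * k^3 * weighted_integral (\<lambda>s. F l s k) t $ a))"
proof -
  define V where "V = bracket_matrix 0 *v (\<chi> m. deriv (\<lambda>\<kappa>. F l 0 \<kappa> $ m) k)
    + (4 * k^3) *s weighted_integral (\<lambda>s. F l s k) t"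
  have F0': "((\<lambda>\<kappa>. F l 0 \<kappa> $ m) has_field_derivative (\<chi> m. deriv (\<lambda>\<kappa>. F l 0 \<kappa> $ m) k) $ m) (at k)" for m
    unfolding vec_lambda_beta by (rule DERIV_deriv_iff_field_differentiable[THEN iffD2, OF F0])
  have "((\<lambda>\<kappa>. F l t \<kappa> $ m) has_field_derivative (Rmat t *v V) $ m) (at k)" for m
    unfolding V_def
    by (rule solution_family_has_field_derivative[where Y="\<lambda>t \<kappa>. F l t \<kappa>", OF U F_solves F0' t])
  then have "Xdot F t k $ m $ l = (Rmat t *v V) $ m" for m
    by (simp add: Xdot_def DERIV_imp_deriv)
  then have "Omat F t k $ j $ l = (matrix_inv (Xmat F t k) *v (Rmat t *v V)) $ j"
    by (simp add: Omat_def matrix_matrix_mult_def matrix_vector_mult_def)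
  also have "\<dots> = (((matrix_inv (Xmat F t k) ** Xmat F t k) ** matrix_inv Bmat) *v V) $ j"
    by (simp add: Rmat_def matrix_vector_mul_assoc matrix_mul_assoc)
  finally show ?thesis
    by (simp add: matrix_inv_left[OF invertible_Xmat[OF t]] V_def matrix_vector_mult_def)
qed

lemma has_vector_derivative_Omat:
  assumes U: "open U" "k \<in> U" and F_solves: "\<And>\<kappa>. \<kappa> \<in> U \<Longrightarrow> qsol p q \<kappa> (\<lambda>t. F l t \<kappa>)"
    and F0: "\<And>m. (\<lambda>\<kappa>. F l 0 \<kappa> $ m) field_differentiable at k" and x: "0 \<le> x"
  shows "((\<lambda>t. Omat F t k $ j $ l) has_vector_derivative 4 * k^3 * Gmat F x k $ j $ 4 * F l x k $ 1)
      (at x within {0..})"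
proof -
  define W where "W = bracket_matrix 0 *v (\<chi> m. deriv (\<lambda>\<kappa>. F l 0 \<kappa> $ m) k)"
  have deriv: "((\<lambda>t. \<Sum>a\<in>UNIV. matrix_inv Bmat $ j $ a * (W $ a + 4 * k^3 * weighted_integral (\<lambda>s. F l s k) t $ a))
    has_vector_derivative (\<Sum>a\<in>UNIV. matrix_inv Bmat $ j $ a * (0 + 4 * k^3 * (F a x k $ 1 * F l x k $ 1))))
    (at x within {0..})"
    by (intro has_vector_derivative_sum has_vector_derivative_mult_right has_vector_derivative_add
        has_vector_derivative_const has_vector_derivative_weighted_integral[OF F_solves[OF U(2)] x])
  have eq: "Omat F t k $ j $ l
      = (\<Sum>a\<in>UNIV. matrix_inv Bmat $ j $ a * (W $ a + 4 * k^3 * weighted_integral (\<lambda>s. F l s k) t $ a))"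
    if "t \<in> {0..}" for t
    using Omat_nth[OF U F_solves F0, of t] that by (simp add: W_def)
  have "(\<Sum>a\<in>UNIV. matrix_inv Bmat $ j $ a * (0 + 4 * k^3 * (F a x k $ 1 * F l x k $ 1)))
      = 4 * k^3 * Gmat F x k $ j $ 4 * F l x k $ 1"
    by (simp add: Gmat_nth_4[OF x] sum_distrib_left sum_distrib_right ac_simps)
  with has_vector_derivative_transform[OF _ eq deriv] x show ?thesis
    by simp
qed

end

lemma open_sectorSr: "open (sectorSr r)"
proof -
  have "sectorSr r = (- \<real>\<^sub>\<le>\<^sub>0 \<inter> Arg -` {0<..<pi/4}) \<inter> {z. r < norm z}"
  proof (intro set_eqI iffI)
    fix z assume z: "z \<in> sectorSr r"
    then have "z \<noteq> 0" and a: "0 < Arg z" "Arg z < pi/4"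
      by (auto simp: sectorSr_def sectorS_def)
    have "z \<notin> \<real>\<^sub>\<le>\<^sub>0"
    proof
      assume "z \<in> \<real>\<^sub>\<le>\<^sub>0"
      with \<open>z \<noteq> 0\<close> have "Arg z = pi"
        by (auto simp: complex_nonpos_Reals_iff complex_eq_iff intro!: Arg_eq_pi[THEN iffD2])
      with a show False by simp
    qed
    with z a show "z \<in> (- \<real>\<^sub>\<le>\<^sub>0 \<inter> Arg -` {0<..<pi/4}) \<inter> {z. r < norm z}"
      by (auto simp: sectorSr_def)
  qed (auto simp: sectorSr_def sectorS_def)
  moreover have "continuous_on (- \<real>\<^sub>\<le>\<^sub>0) Arg"
    by (rule continuous_at_imp_continuous_on) (auto intro: continuous_at_Arg)
  then have "open (- \<real>\<^sub>\<le>\<^sub>0 \<inter> Arg -` {0<..<pi/4})"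
    by (rule continuous_open_preimage) auto
  moreover have "open {z::complex. r < norm z}"
    by (rule open_Collect_less) (auto intro: continuous_intros)
  ultimately show ?thesis
    by (simp add: open_Int)
qed

theorem lemma2p2:
  fixes \<gamma> r :: real and p q :: "real \<Rightarrow> real"
    and phi2 phi4 psi1 psi2 :: "real \<Rightarrow> complex \<Rightarrow> complex^4"
  assumes "\<gamma> > 0" and "r > 0"
    and "p absolutely_integrable_on {0..}" and "q absolutely_integrable_on {0..}"
    and "\<forall>x>\<gamma>. p x = 0" and "\<forall>x>\<gamma>. q x = 0"
    and "\<forall>k. qsol p q k (\<lambda>x. phi2 x k) \<and> phi2 0 k = axis 2 1"
    and "\<forall>k. qsol p q k (\<lambda>x. phi4 x k) \<and> phi4 0 k = axis 4 1"
    and "\<forall>k\<in>sectorS. qsol p q k (\<lambda>x. psi1 x k) \<and> (\<forall>x>\<gamma>. psi1 x k $ 1 = exp (- k * of_real x))"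
    and "\<forall>k\<in>sectorS. qsol p q k (\<lambda>x. psi2 x k) \<and> (\<forall>x>\<gamma>. psi2 x k $ 1 = exp (\<i> * k * of_real x))"
    and "\<forall>x\<ge>0. \<forall>m. (\<lambda>k. psi1 x k $ m) analytic_on sectorSr r \<and> (\<lambda>k. psi2 x k $ m) analytic_on sectorSr r"
    and "\<forall>x\<ge>0. \<forall>k\<in>sectorSr r. invertible (Xmat (cols phi2 phi4 psi1 psi2) x k)"
  shows "\<forall>x\<ge>0. \<forall>k\<in>sectorSr r. \<forall>j l.
     ((\<lambda>t. Omat (cols phi2 phi4 psi1 psi2) t k $ j $ l) has_vector_derivative
        (4 * k^3 * Gmat (cols phi2 phi4 psi1 psi2) x k $ j $ 4 * cols phi2 phi4 psi1 psi2 l x k $ 1))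
       (at x within {0..})"
proof (intro allI impI ballI)
  fix x :: real and k :: complex and j l :: 4
  assume x: "0 \<le> x" and k: "k \<in> sectorSr r"
  define F where "F = cols phi2 phi4 psi1 psi2"
  have F_solves: "qsol p q \<kappa> (\<lambda>t. F c t \<kappa>)" if "\<kappa> \<in> sectorSr r" for c \<kappa>
    using that assms(7-10) exhaust_4[of c] by (auto simp: F_def cols_def sectorSr_def)
  interpret fundamental_system p q F k
    using F_solves[OF k] assms(12) k by unfold_locales (auto simp: F_def)
  have "(\<lambda>\<kappa>. F l 0 \<kappa> $ m) field_differentiable at k" for m
    using exhaust_4[of l] assms(7,8) analytic_on_imp_differentiable_at[OF _ k] assms(11)
    by (auto simp: F_def cols_def)
  from has_vector_derivative_Omat[OF open_sectorSr k F_solves this x]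
  show "((\<lambda>t. Omat (cols phi2 phi4 psi1 psi2) t k $ j $ l) has_vector_derivative
      (4 * k^3 * Gmat (cols phi2 phi4 psi1 psi2) x k $ j $ 4 * cols phi2 phi4 psi1 psi2 l x k $ 1))
      (at x within {0..})"
    by (simp add: F_def)
qed

end
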